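(* Let $\gamma$ be an orbit of the regularized planar two-center problem lying on a regular torus $\mathbb{T}$ with rotation number $W$, and suppose that $\gamma$ (followed for all times $\tau\in\mathbb{R}$) passes through a collision point at exactly one time. Then $W$ is irrational.
   Context: Fix $d>0$ and masses $m_1,m_2>0$ at $(-d,0)$ and $(d,0)$. A test particle moves with Hamiltonian $H=\tfrac12(p_x^2+p_y^2)-m_1/\sqrt{(x+d)^2+y^2}-m_2/\sqrt{(x-d)^2+y^2}$; energies $h<0$. Regularization: $(\lambda,\nu)\in\mathbb{R}\times(\mathbb{R}/2\pi\mathbb{Z})$ with $x+iy=d\sin(\nu+i\lambda)$ (a double cover branched over the centers), conjugate momenta $p_\lambda,p_\nu$, time change $dt=d^2(\cosh^2\lambda-\sin^2\nu)\,d\tau$. On $H=h$ the motion becomes the flow (time $\tau$, defined also through collisions) of $H_\lambda+H_\nu$ on its zero level, $H_\lambda=\tfrac12p_\lambda^2-d(m_1+m_2)\cosh\lambda-hd^2\cosh^2\lambda$, $H_\nu=\tfrac12p_\nu^2+d(m_1-m_2)\sin\nu+hd^2\sin^2\nu$; orbits lie in sets $\{H_\lambda=-g,\ H_\nu=g\}$ for a separation constant $g$. Regular torus: a compact connected component $\mathbb{T}=C_\lambda\times C_\nu$ of such a set with $-g$ a regular value of $H_\lambda$ and $g$ a regular value of $H_\nu$ ($C_\lambda$ a closed curve in the $(\lambda,p_\lambda)$-plane, $C_\nu$ a closed curve in the cylinder $(\mathbb{R}/2\pi\mathbb{Z})\times\mathbb{R}$). Rotation number $W=T_\nu/T_\lambda$,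 where $T_\lambda,T_\nu$ are the $\tau$-periods of the motions on $C_\lambda,C_\nu$; in angle coordinates $\theta_1$ along $C_\nu$, $\theta_2$ along $C_\lambda$ (each in $\mathbb{R}/\mathbb{Z}$, increasing uniformly in $\tau$ with period 1) orbits on $\mathbb{T}$ lift to lines $\theta_2=W\theta_1+\mathrm{const}$. Collision points are the points of $\mathbb{T}$ with $\lambda=0$ and $\nu\equiv\pm\pi/2\pmod{2\pi}$ (they project to the two centers). *)

theory Defs
  imports "HOL-Analysis.Analysis"
begin

text \<open>Regularized planar two-center problem. Points of the (lambda,p_lambda)-plane
and lifts (nu,p_nu) of points of the cylinder are pairs of reals (first component the
position, second the momentum).\<close>

definition Hlam :: "real \<Rightarrow> real \<Rightarrow> real \<Rightarrow> real \<Rightarrow> real \<times> real \<Rightarrow> real" where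
  "Hlam d m1 m2 h z = (snd z)\<^sup>2 / 2 - d * (m1 + m2) * cosh (fst z) - h * d\<^sup>2 * (cosh (fst z))\<^sup>2"

definition Hnu :: "real \<Rightarrow> real \<Rightarrow> real \<Rightarrow> real \<Rightarrow> real \<times> real \<Rightarrow> real" where
  "Hnu d m1 m2 h z = (snd z)\<^sup>2 / 2 + d * (m1 - m2) * sin (fst z) + h * d\<^sup>2 * (sin (fst z))\<^sup>2"

text \<open>The cylinder (R/2piZ) x R, realised as the subset S^1 x R of R^3 via its standard embedding.\<close>

definition cyl :: "real \<times> real \<Rightarrow> real \<times> real \<times> real" where
  "cyl z = (cos (fst z), sin (fst z), snd z)"

definition regular_value :: "(real \<times> real \<Rightarrow> real) \<Rightarrow> real \<Rightarrow> bool" where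
  "regular_value H c \<longleftrightarrow>
     (\<forall>x. H x = c \<longrightarrow> H differentiable (at x) \<and> \<not> (H has_derivative (\<lambda>v. 0)) (at x))"

definition ham_solution :: "(real \<times> real \<Rightarrow> real) \<Rightarrow> (real \<Rightarrow> real \<times> real) \<Rightarrow> bool" where
  "ham_solution H z \<longleftrightarrow>
     (\<forall>t. \<exists>DH. (H has_derivative DH) (at (z t)) \<and>
              (z has_vector_derivative (DH (0, 1), - DH (1, 0))) (at t))"

definition period :: "(real \<Rightarrow> 'a) \<Rightarrow> real" where
  "period f = Inf {T. T > 0 \<and> (\<forall>t. f (t + T) = f t)}"

definition level_set :: "real \<Rightarrow> real \<Rightarrow> real \<Rightarrow> real \<Rightarrow> real \<Rightarrow> ((real \<times> real) \<times> (real \<times> real \<times> real)) set" where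
  "level_set d m1 m2 h g = {(zl, c). Hlam d m1 m2 h zl = - g \<and> c \<in> cyl ` {zn. Hnu d m1 m2 h zn = g}}"

definition regular_torus :: "real \<Rightarrow> real \<Rightarrow> real \<Rightarrow> real \<Rightarrow> real \<Rightarrow> ((real \<times> real) \<times> (real \<times> real \<times> real)) set \<Rightarrow> bool" where
  "regular_torus d m1 m2 h g TT \<longleftrightarrow>
     regular_value (Hlam d m1 m2 h) (- g) \<and> regular_value (Hnu d m1 m2 h) g \<and>
     (\<exists>x \<in> level_set d m1 m2 h g. TT = connected_component_set (level_set d m1 m2 h g) x) \<and>
     compact TT"

definition collision :: "real \<times> real \<Rightarrow> real \<times> real \<Rightarrow> bool" where
  "collision zl zn \<longleftrightarrow> fst zl = 0 \<and> (\<exists>k::int. fst zn = pi/2 + k * pi)"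

end

theory Submission
  imports Defs
begin

text \<open>After separation both coordinates perform one-degree-of-freedom Newtonian motions
  \<open>q'' = -V'(q)\<close> on regular energy levels. On a compact regular torus the \<open>\<lambda>\<close>-motion is
  bounded, so it oscillates between two turning points; the \<open>\<nu>\<close>-motion either oscillates
  or keeps moving in one direction around the cylinder. By uniqueness of solutions both
  motions are periodic, and since the velocity never vanishes on a regular level their
  minimal periods are attained. If the rotation number were rational, a common multiple
  \<open>P > 0\<close> of the two periods would be a period of the whole orbit, so a collision at time
  \<open>\<tau>\<close> would recur at time \<open>\<tau> + P\<close>.\<close>

definition newton_solution :: "(real \<Rightarrow> real) \<Rightarrow> (real \<Rightarrow> real) \<Rightarrow> (real \<Rightarrow> real) \<Rightarrow> bool" where
  "newton_solution V' q p \<longleftrightarrow>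
     (\<forall>t. (q has_real_derivative p t) (at t) \<and> (p has_real_derivative - V' (q t)) (at t))"

lemma newton_solution_isCont:
  assumes "newton_solution V' q p"
  shows "isCont q t" and "isCont p t"
  using assms DERIV_isCont unfolding newton_solution_def by blast+

lemma newton_solution_time_reversal:
  assumes "newton_solution V' q p"
  shows "newton_solution V' (\<lambda>s. q (c - s)) (\<lambda>s. - p (c - s))"
  unfolding newton_solution_def
proof
  fix s
  have reverse: "((\<lambda>s. c - s) has_real_derivative -1) (at s)"
    by (auto intro!: derivative_eq_intros)
  have "(q has_real_derivative p (c - s)) (at (c - s))"
    and "(p has_real_derivative - V' (q (c - s))) (at (c - s))"
    using assms unfolding newton_solution_def by auto
  from DERIV_chain2[OF this(1) reverse] DERIV_minus[OF DERIV_chain2[OF this(2) reverse]]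
  show "((\<lambda>s. q (c - s)) has_real_derivative - p (c - s)) (at s) \<and>
        ((\<lambda>s. - p (c - s)) has_real_derivative - V' (q (c - s))) (at s)"
    by simp
qed

lemma newton_solution_translate:
  assumes "newton_solution V' q p" and "\<And>x. V' (x + a) = V' x"
  shows "newton_solution V' (\<lambda>s. q (s + T) + a) (\<lambda>s. p (s + T))"
  unfolding newton_solution_def
proof
  fix s
  have shift: "((\<lambda>s. s + T) has_real_derivative 1) (at s)"
    by (auto intro!: derivative_eq_intros)
  have "(q has_real_derivative p (s + T)) (at (s + T))"
    and "(p has_real_derivative - V' (q (s + T))) (at (s + T))"
    using assms(1) unfolding newton_solution_def by auto
  from DERIV_add[OF DERIV_chain2[OF this(1) shift] DERIV_const[of a]] DERIV_chain2[OF this(2) shift]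
  show "((\<lambda>s. q (s + T) + a) has_real_derivative p (s + T)) (at s) \<and>
        ((\<lambda>s. p (s + T)) has_real_derivative - V' (q (s + T) + a)) (at s)"
    using assms(2) by simp
qed

lemma newton_solution_reflect:
  assumes "newton_solution V' q p"
  shows "newton_solution (\<lambda>x. - V' (- x)) (\<lambda>t. - q t) (\<lambda>t. - p t)"
  using assms unfolding newton_solution_def by (auto intro!: derivative_eq_intros)

lemma continuous_zero_or_sign_after:
  fixes p :: "real \<Rightarrow> real"
  assumes cont: "\<And>t. isCont p t"
  shows "(\<exists>t'>t. p t' = 0) \<or> (\<forall>t'>t. p t' > 0) \<or> (\<forall>t'>t. p t' < 0)"
proof (rule ccontr)
  assume "\<not> ?thesis"
  then obtain u v where uv: "u > t" "v > t" "p u > 0" "p v < 0" and nonzero: "\<And>t'. t' > t \<Longrightarrow> p t' \<noteq> 0"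
    by (metis linorder_neqE_linordered_idom)
  have "\<exists>x. min u v \<le> x \<and> p x = 0"
  proof (cases "u \<le> v")
    case True
    then show ?thesis using IVT2[of p v 0 u] cont uv by fastforce
  next
    case False
    then show ?thesis using IVT[of p v 0 u] cont uv by fastforce
  qed
  then show False using nonzero uv by fastforce
qed

lemma continuous_two_zeros_or_sign_after:
  fixes p :: "real \<Rightarrow> real"
  assumes cont: "\<And>t. isCont p t"
  obtains t1 t2 where "t1 < t2" "p t1 = 0" "p t2 = 0"
    | t0 where "p t0 \<ge> 0" "\<And>t. t > t0 \<Longrightarrow> p t > 0"
    | t0 where "p t0 \<le> 0" "\<And>t. t > t0 \<Longrightarrow> p t < 0"
proof (cases "\<exists>t1. p t1 = 0")
  case True
  then obtain t1 where t1: "p t1 = 0" by blast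
  from continuous_zero_or_sign_after[OF cont, of t1] show thesis
  proof (elim disjE exE conjE)
    fix t2 assume "t2 > t1" "p t2 = 0"
    with t1 show thesis using that(1) by blast
  next
    assume "\<forall>t>t1. p t > 0"
    with t1 show thesis by (intro that(2)[of t1]) auto
  next
    assume "\<forall>t>t1. p t < 0"
    with t1 show thesis by (intro that(3)[of t1]) auto
  qed
next
  case False
  from continuous_zero_or_sign_after[OF cont, of 0] False show thesis
  proof (elim disjE)
    assume "\<forall>t>0. p t > 0"
    then show thesis by (intro that(2)[of 1]) (auto intro: less_imp_le)
  next
    assume "\<forall>t>0. p t < 0"
    then show thesis by (intro that(3)[of 1]) (auto intro: less_imp_le)
  qed blast
qed

lemma mono_bounded_tendsto_Sup:
  fixes f :: "real \<Rightarrow> real"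
  assumes mono: "\<And>s t. t0 \<le> s \<Longrightarrow> s \<le> t \<Longrightarrow> f s \<le> f t" and bounded: "\<And>t. t \<ge> t0 \<Longrightarrow> f t \<le> B"
  shows "(f \<longlongrightarrow> Sup (f ` {t0..})) at_top"
proof (rule tendstoI)
  fix e :: real
  assume "e > 0"
  let ?L = "Sup (f ` {t0..})"
  have bdd: "bdd_above (f ` {t0..})" using bounded by (auto intro!: bdd_aboveI)
  obtain t1 where t1: "t1 \<ge> t0" "f t1 > ?L - e"
    using less_cSupD[of "f ` {t0..}" "?L - e"] \<open>e > 0\<close> by auto
  have "dist (f t) ?L < e" if "t \<ge> t1" for t
    using mono[OF t1(1) that] cSup_upper[OF _ bdd, of "f t"] t1 that by (auto simp: dist_real_def)
  then show "\<forall>\<^sub>F t in at_top. dist (f t) ?L < e"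
    unfolding eventually_at_top_linorder by blast
qed

lemma DERIV_tendsto_pos_imp_filterlim_at_top:
  fixes f :: "real \<Rightarrow> real"
  assumes deriv: "\<And>t. (f has_real_derivative f' t) (at t)" and lim: "(f' \<longlongrightarrow> l) at_top" and "l > 0"
  shows "filterlim f at_top at_top"
proof -
  obtain N where N: "\<And>t. t \<ge> N \<Longrightarrow> f' t > l / 2"
    using order_tendstoD(1)[OF lim, of "l / 2"] \<open>l > 0\<close> by (auto simp: eventually_at_top_linorder)
  have lower: "f N - l / 2 * N + l / 2 * t \<le> f t" if "t \<ge> N" for t
  proof -
    have "(\<lambda>t. f t - l / 2 * t) N \<le> (\<lambda>t. f t - l / 2 * t) t"
    proof (rule DERIV_nonneg_imp_nondecreasing[OF that])
      fix x assume "N \<le> x"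
      then show "\<exists>y. ((\<lambda>t. f t - l / 2 * t) has_real_derivative y) (at x) \<and> y \<ge> 0"
        using N[of x] by (auto intro!: derivative_eq_intros deriv exI[of _ "f' x - l / 2"])
    qed
    then show ?thesis by simp
  qed
  have "filterlim (\<lambda>t. f N - l / 2 * N + l / 2 * t) at_top at_top"
    using \<open>l > 0\<close>
    by (intro filterlim_tendsto_add_at_top[OF tendsto_const]
        filterlim_tendsto_pos_mult_at_top[OF tendsto_const _ filterlim_ident]) simp
  then show ?thesis
    by (rule filterlim_at_top_mono, unfold eventually_at_top_linorder) (blast intro: lower)
qed

lemma DERIV_tendsto_nonzero_imp_not_convergent:
  fixes f :: "real \<Rightarrow> real"
  assumes deriv: "\<And>t. (f has_real_derivative f' t) (at t)" and lim: "(f' \<longlongrightarrow> l) at_top" and "l \<noteq> 0"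
  shows "\<not> (f \<longlongrightarrow> L) at_top"
proof
  assume conv: "(f \<longlongrightarrow> L) at_top"
  show False
  proof (cases "l > 0")
    case True
    from DERIV_tendsto_pos_imp_filterlim_at_top[OF deriv lim True] conv show False
      using filterlim_at_top_imp_at_infinity not_tendsto_and_filterlim_at_infinity by fastforce
  next
    case False
    have "filterlim (\<lambda>t. - f t) at_top at_top"
      using \<open>l \<noteq> 0\<close> False
      by (intro DERIV_tendsto_pos_imp_filterlim_at_top[of _ "\<lambda>t. - f' t" "- l"])
        (auto intro!: DERIV_minus deriv tendsto_minus lim)
    moreover have "((\<lambda>t. - f t) \<longlongrightarrow> - L) at_top" using conv by (rule tendsto_minus)
    ultimately show False
      using filterlim_at_top_imp_at_infinity not_tendsto_and_filterlim_at_infinity by fastforce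
  qed
qed

lemma periodic_of_nat_mult:
  assumes "\<And>t. f (t + T) = f t"
  shows "f (t + of_nat n * T) = f t"
proof (induction n arbitrary: t)
  case (Suc n)
  have "f (t + of_nat (Suc n) * T) = f ((t + of_nat n * T) + T)" by (simp add: algebra_simps)
  then show ?case using assms Suc by simp
qed simp

lemma common_period_of_rational_ratio:
  fixes A B :: real
  assumes "A > 0" "B > 0" "B / A \<in> \<rat>" "\<And>t. f (t + A) = f t" "\<And>t. g (t + B) = g t"
  obtains P where "P > 0" "\<And>t. f (t + P) = f t" "\<And>t. g (t + P) = g t"
proof -
  obtain a b :: int where b: "b > 0" and ratio: "B / A = of_int a / of_int b"
    using Rats_cases'[OF assms(3)] by metis
  have "of_int a / of_int b > (0::real)" using divide_pos_pos[OF assms(2,1)] ratio by simp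
  with b have "a > 0" by (simp add: zero_less_divide_iff)
  define P where "P = of_int b * B"
  have "P = of_nat (nat a) * A" using ratio b \<open>a > 0\<close> assms(1) unfolding P_def by (simp add: field_simps)
  moreover have "P = of_nat (nat b) * B" using b unfolding P_def by simp
  moreover have "P > 0" using b assms(2) unfolding P_def by simp
  ultimately show thesis
    using that periodic_of_nat_mult[of f A] periodic_of_nat_mult[of g B] assms(4,5) by metis
qed

definition has_minimal_period :: "(real \<Rightarrow> 'a) \<Rightarrow> bool" where
  "has_minimal_period f \<longleftrightarrow> period f > 0 \<and> (\<forall>t. f (t + period f) = f t)"

text \<open>Moving with nonzero velocity, \<open>f\<close> cannot return to \<open>f t0\<close> within some time \<open>\<delta>\<close>; so the
  periods form a closed set bounded below by \<open>\<delta>\<close>, which contains its infimum.\<close>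

lemma period_of_regular_curve:
  fixes f :: "real \<Rightarrow> 'a::real_inner"
  assumes deriv: "\<And>t. (f has_vector_derivative f' t) (at t)" and "f' t0 \<noteq> 0"
    and "T > 0" "\<And>t. f (t + T) = f t"
  shows "has_minimal_period f"
proof -
  have "((\<lambda>t. f t \<bullet> f' t0) has_real_derivative f' t0 \<bullet> f' t0) (at t0)"
    using bounded_linear.has_vector_derivative[OF bounded_linear_inner_left deriv]
    by (simp add: has_real_derivative_iff_has_vector_derivative)
  moreover have "f' t0 \<bullet> f' t0 > 0" using \<open>f' t0 \<noteq> 0\<close> by simp
  ultimately obtain \<delta> where "\<delta> > 0"
    and increase: "\<And>h. 0 < h \<Longrightarrow> h < \<delta> \<Longrightarrow> f t0 \<bullet> f' t0 < f (t0 + h) \<bullet> f' t0"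
    using DERIV_pos_inc_right by blast
  have leaves: "f (t0 + h) \<noteq> f t0" if "0 < h" "h < \<delta>" for h
    using increase[OF that] by auto
  define S where "S = {T. T > 0 \<and> (\<forall>t. f (t + T) = f t)}"
  have "T \<ge> \<delta>" if "T > 0" "\<And>t. f (t + T) = f t" for T
    using leaves[of T] that by (meson not_le)
  then have "S = (\<Inter>t. {T. f (t + T) = f t}) \<inter> {\<delta>..}"
    using \<open>\<delta> > 0\<close> unfolding S_def by (auto intro: order.strict_trans2)
  moreover have "continuous_on UNIV f"
    using deriv by (auto simp: continuous_on_eq_continuous_at intro: has_vector_derivative_continuous)
  then have "continuous_on UNIV (\<lambda>T. f (t + T))" for t
    by (rule continuous_on_compose2[of UNIV f UNIV "\<lambda>T. t + T"]) (auto intro: continuous_intros)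
  then have "closed {T. f (t + T) = f t}" for t
    by (rule closed_Collect_eq[OF _ continuous_on_const])
  ultimately have "closed S" by auto
  moreover have "S \<noteq> {}" "bdd_below S" using assms(3,4) unfolding S_def by (auto intro!: bdd_belowI[of _ 0])
  ultimately have "Inf S \<in> S" by (rule closed_contains_Inf[rotated -1])
  then show ?thesis unfolding has_minimal_period_def period_def S_def by simp
qed

lemma gronwall_zero:
  fixes u :: "real \<Rightarrow> real"
  assumes "a \<le> b" "u a = 0" "u b \<ge> 0"
    and deriv: "\<And>t. a \<le> t \<Longrightarrow> t \<le> b \<Longrightarrow> \<exists>D. (u has_real_derivative D) (at t) \<and> D \<le> K * u t"
  shows "u b = 0"
proof -
  let ?w = "\<lambda>t. u t * exp (- K * t)"
  have "?w b \<le> ?w a"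
  proof (rule DERIV_nonpos_imp_nonincreasing[OF \<open>a \<le> b\<close>])
    fix t assume "a \<le> t" "t \<le> b"
    then obtain D where "(u has_real_derivative D) (at t)" "D \<le> K * u t" using deriv by blast
    then show "\<exists>y. (?w has_real_derivative y) (at t) \<and> y \<le> 0"
      by (intro exI[of _ "(D - K * u t) * exp (- K * t)"])
        (auto intro!: derivative_eq_intros simp: algebra_simps mult_nonpos_nonneg)
  qed
  with assms(2,3) show ?thesis by (simp add: mult_le_0_iff)
qed

lemma lipschitz_cross_term_le:
  fixes x y z L :: real
  assumes "\<bar>z\<bar> \<le> L * \<bar>x\<bar>" and "L \<ge> 0"
  shows "2 * x * y - 2 * y * z \<le> (1 + L) * (x\<^sup>2 + y\<^sup>2)"
proof -
  have "- 2 * y * z \<le> \<bar>2 * y * z\<bar>"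
    using abs_ge_minus_self[of "2 * y * z"] by (simp only: mult_minus_left)
  also have "\<dots> = 2 * \<bar>y\<bar> * \<bar>z\<bar>" by (simp only: abs_mult abs_numeral)
  also have "\<dots> \<le> 2 * \<bar>y\<bar> * (L * \<bar>x\<bar>)" using assms(1) by (simp add: mult_left_mono)
  also have "\<dots> = L * (2 * \<bar>y\<bar> * \<bar>x\<bar>)" by simp
  also have "\<dots> \<le> L * (x\<^sup>2 + y\<^sup>2)"
    using assms(2) sum_squares_bound[of "\<bar>y\<bar>" "\<bar>x\<bar>"] by (intro mult_left_mono) (auto simp: add.commute)
  finally show ?thesis using sum_squares_bound[of x y] by (simp add: algebra_simps)
qed

text \<open>\<open>V''\<close> only serves to make \<open>V'\<close> locally Lipschitz, which uniqueness of solutions needs.\<close>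

locale potential =
  fixes V V' V'' :: "real \<Rightarrow> real"
  assumes V_deriv: "(V has_real_derivative V' x) (at x)"
    and V'_deriv: "(V' has_real_derivative V'' x) (at x)"
    and V''_cont: "isCont V'' x"
begin

lemma lipschitz_on_V':
  obtains L where "L-lipschitz_on {-R..R} V'"
proof -
  have "compact (V'' ` {-R..R})"
    by (intro compact_continuous_image continuous_at_imp_continuous_on) (auto simp: V''_cont)
  then obtain M where "M > 0" and M: "\<And>x. x \<in> {-R..R} \<Longrightarrow> \<bar>V'' x\<bar> \<le> M"
    by (auto simp: bounded_pos dest!: compact_imp_bounded)
  have "\<bar>V' x - V' y\<bar> \<le> M * \<bar>x - y\<bar>" if "x \<in> {-R..R}" "y \<in> {-R..R}" for x y
    using field_differentiable_bound[of "{-R..R}" V' V'' M x y] M that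
      has_field_derivative_at_within[OF V'_deriv]
    by auto
  with \<open>M > 0\<close> have "M-lipschitz_on {-R..R} V'"
    by (intro lipschitz_onI) (auto simp: dist_real_def)
  then show thesis by (rule that)
qed

lemma V'_periodic:
  assumes "\<And>x. V (x + c) = V x"
  shows "V' (x + c) = V' x"
proof -
  have "((\<lambda>x. x + c) has_real_derivative 1) (at x)" by (auto intro!: derivative_eq_intros)
  from DERIV_chain2[OF V_deriv this]
  have "((\<lambda>x. V (x + c)) has_real_derivative V' (x + c)) (at x)" by simp
  then show ?thesis using assms by (simp add: DERIV_unique[OF _ V_deriv])
qed

lemma newton_solution_unique_forward:
  assumes sol1: "newton_solution V' q1 p1" and sol2: "newton_solution V' q2 p2"
    and "q1 a = q2 a" "p1 a = p2 a" and "a \<le> b"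
  shows "q1 b = q2 b \<and> p1 b = p2 b"
proof -
  obtain R1 where R1: "\<And>t. a \<le> t \<Longrightarrow> t \<le> b \<Longrightarrow> \<bar>q1 t\<bar> \<le> R1"
    using isCont_bounded[OF \<open>a \<le> b\<close>, of "\<lambda>t. \<bar>q1 t\<bar>"] newton_solution_isCont[OF sol1]
    by (auto intro: continuous_intros)
  obtain R2 where R2: "\<And>t. a \<le> t \<Longrightarrow> t \<le> b \<Longrightarrow> \<bar>q2 t\<bar> \<le> R2"
    using isCont_bounded[OF \<open>a \<le> b\<close>, of "\<lambda>t. \<bar>q2 t\<bar>"] newton_solution_isCont[OF sol2]
    by (auto intro: continuous_intros)
  obtain L where L: "L-lipschitz_on {-max R1 R2..max R1 R2} V'" by (rule lipschitz_on_V')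
  then have "L \<ge> 0" by (simp add: lipschitz_on_def)
  define u where "u t = (q1 t - q2 t)\<^sup>2 + (p1 t - p2 t)\<^sup>2" for t
  have "u b = 0"
  proof (rule gronwall_zero[of a b u "1 + L"])
    fix t assume t: "a \<le> t" "t \<le> b"
    let ?dq = "q1 t - q2 t" and ?dp = "p1 t - p2 t" and ?dV = "V' (q1 t) - V' (q2 t)"
    have "q1 t \<in> {-max R1 R2..max R1 R2}" "q2 t \<in> {-max R1 R2..max R1 R2}"
      using R1[OF t] R2[OF t] by (auto simp: abs_le_iff)
    then have "\<bar>?dV\<bar> \<le> L * \<bar>?dq\<bar>"
      using lipschitz_onD[OF L] by (simp add: dist_real_def)
    then have "2 * ?dq * ?dp - 2 * ?dp * ?dV \<le> (1 + L) * u t"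
      unfolding u_def using \<open>L \<ge> 0\<close> by (rule lipschitz_cross_term_le)
    moreover have "(u has_real_derivative 2 * ?dq * ?dp - 2 * ?dp * ?dV) (at t)"
      using sol1 sol2 unfolding u_def[abs_def] newton_solution_def
      by (auto intro!: derivative_eq_intros simp: algebra_simps)
    ultimately show "\<exists>D. (u has_real_derivative D) (at t) \<and> D \<le> (1 + L) * u t" by blast
  qed (use assms in \<open>auto simp: u_def\<close>)
  then show ?thesis unfolding u_def by (simp add: add_nonneg_eq_0_iff)
qed

lemma newton_solution_unique:
  assumes sol1: "newton_solution V' q1 p1" and sol2: "newton_solution V' q2 p2"
    and "q1 a = q2 a" "p1 a = p2 a"
  shows "q1 t = q2 t \<and> p1 t = p2 t"
proof (cases "a \<le> t")
  case True
  then show ?thesis using newton_solution_unique_forward[OF sol1 sol2 assms(3,4)] by blast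
next
  case False
  then show ?thesis
    using newton_solution_unique_forward[OF newton_solution_time_reversal[OF sol1, of 0]
        newton_solution_time_reversal[OF sol2, of 0], of "- a" "- t"] assms(3,4)
    by simp
qed

text \<open>Reflecting an orbit in each of two turning points is a time reversal; composing the
  two reflections translates time by twice their distance.\<close>

lemma newton_solution_periodic_of_turning_points:
  assumes sol: "newton_solution V' q p" and "p t1 = 0" "p t2 = 0"
  shows "q (t + 2 * (t2 - t1)) = q t \<and> p (t + 2 * (t2 - t1)) = p t"
proof -
  have reflect: "q (2 * s - t) = q t \<and> - p (2 * s - t) = p t" if "p s = 0" for s t
    using newton_solution_unique[OF newton_solution_time_reversal[OF sol, of "2 * s"] sol, of s t] that
    by simp
  have "t + 2 * (t2 - t1) = 2 * t2 - (2 * t1 - t)" by simp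
  then show ?thesis using reflect[OF \<open>p t1 = 0\<close>] reflect[OF \<open>p t2 = 0\<close>] by (metis minus_minus)
qed

lemma newton_hamiltonian_derivative:
  "((\<lambda>z. (snd z)\<^sup>2 / 2 + V (fst z)) has_derivative (\<lambda>w. snd z * snd w + V' (fst z) * fst w)) (at z)"
proof -
  have "((\<lambda>z. V (fst z)) has_derivative (\<lambda>w. fst w * V' (fst z))) (at z)"
    by (rule DERIV_compose_FDERIV[OF V_deriv has_derivative_fst[OF has_derivative_ident]])
  then show ?thesis by (auto intro!: derivative_eq_intros simp: mult.commute)
qed

lemma ham_solution_imp_newton_solution:
  assumes "ham_solution (\<lambda>z. (snd z)\<^sup>2 / 2 + V (fst z)) z"
  shows "newton_solution V' (\<lambda>t. fst (z t)) (\<lambda>t. snd (z t))"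
  unfolding newton_solution_def
proof
  fix t
  obtain DH where "((\<lambda>z. (snd z)\<^sup>2 / 2 + V (fst z)) has_derivative DH) (at (z t))"
    and z_deriv: "(z has_vector_derivative (DH (0, 1), - DH (1, 0))) (at t)"
    using assms unfolding ham_solution_def by blast
  then have "DH = (\<lambda>w. snd (z t) * snd w + V' (fst (z t)) * fst w)"
    using has_derivative_unique newton_hamiltonian_derivative by blast
  with z_deriv have "(z has_vector_derivative (snd (z t), - V' (fst (z t)))) (at t)" by simp
  then show "((\<lambda>t. fst (z t)) has_real_derivative snd (z t)) (at t) \<and>
      ((\<lambda>t. snd (z t)) has_real_derivative - V' (fst (z t))) (at t)"
    unfolding has_real_derivative_iff_has_vector_derivative
    using bounded_linear.has_vector_derivative[OF bounded_linear_fst]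
      bounded_linear.has_vector_derivative[OF bounded_linear_snd]
    by fastforce
qed

lemma regular_value_imp_V'_nonzero:
  assumes "regular_value (\<lambda>z. (snd z)\<^sup>2 / 2 + V (fst z)) E" and "V x = E"
  shows "V' x \<noteq> 0"
proof
  assume "V' x = 0"
  then have "((\<lambda>z. (snd z)\<^sup>2 / 2 + V (fst z)) has_derivative (\<lambda>w. 0)) (at (x, 0))"
    using newton_hamiltonian_derivative[of "(x, 0)"] by simp
  with assms show False unfolding regular_value_def by auto
qed

end

locale regular_motion = potential +
  fixes q p :: "real \<Rightarrow> real" and E :: real
  assumes solution: "newton_solution V' q p"
    and energy: "(p t)\<^sup>2 / 2 + V (q t) = E"
    and regular_level: "V x = E \<Longrightarrow> V' x \<noteq> 0"
begin

lemma q_deriv: "(q has_real_derivative p t) (at t)"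
  using solution unfolding newton_solution_def by blast

lemma p_deriv: "(p has_real_derivative - V' (q t)) (at t)"
  using solution unfolding newton_solution_def by blast

lemma isCont_q: "isCont q t" and isCont_p: "isCont p t"
  using newton_solution_isCont[OF solution] by blast+

lemma momentum_squared: "(p t)\<^sup>2 = 2 * (E - V (q t))"
  using energy[of t] by simp

lemma reflected_regular_motion:
  "regular_motion (\<lambda>x. V (- x)) (\<lambda>x. - V' (- x)) (\<lambda>x. V'' (- x)) (\<lambda>t. - q t) (\<lambda>t. - p t) E"
proof unfold_locales
  fix x t :: real
  have neg: "(uminus has_real_derivative -1) (at x)" by (auto intro!: derivative_eq_intros)
  show "((\<lambda>x. V (- x)) has_real_derivative - V' (- x)) (at x)"
    using DERIV_chain2[OF V_deriv neg] by simp
  show "((\<lambda>x. - V' (- x)) has_real_derivative V'' (- x)) (at x)"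
    using DERIV_minus[OF DERIV_chain2[OF V'_deriv neg]] by simp
  show "isCont (\<lambda>x. V'' (- x)) x"
    by (rule isCont_o2[OF _ V''_cont]) (auto intro: continuous_intros)
  show "newton_solution (\<lambda>x. - V' (- x)) (\<lambda>t. - q t) (\<lambda>t. - p t)"
    by (rule newton_solution_reflect[OF solution])
  show "(- p t)\<^sup>2 / 2 + V (- (- q t)) = E" using energy by simp
  show "V (- x) = E \<Longrightarrow> - V' (- x) \<noteq> 0" using regular_level by simp
qed

text \<open>A monotone motion that stays bounded would converge to a point of the energy level;
  there either the momentum or the force is nonzero, which is incompatible with convergence.\<close>

lemma unbounded_above_if_moving_right:
  assumes moving: "\<And>t. t \<ge> t0 \<Longrightarrow> p t > 0"
  shows "\<exists>t\<ge>t0. q t > B"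
proof (rule ccontr)
  assume "\<not> ?thesis"
  then have bounded: "q t \<le> B" if "t \<ge> t0" for t using that by (simp add: not_less)
  have mono: "q s \<le> q t" if "t0 \<le> s" "s \<le> t" for s t
  proof (rule DERIV_nonneg_imp_nondecreasing[OF that(2)])
    fix x assume "s \<le> x"
    with that(1) have "p x \<ge> 0" using moving[of x] by simp
    then show "\<exists>y. (q has_real_derivative y) (at x) \<and> y \<ge> 0" using q_deriv by blast
  qed
  define L where "L = Sup (q ` {t0..})"
  have q_lim: "(q \<longlongrightarrow> L) at_top"
    unfolding L_def by (rule mono_bounded_tendsto_Sup[OF mono bounded])
  have "((\<lambda>t. (p t)\<^sup>2) \<longlongrightarrow> 2 * (E - V L)) at_top"
    unfolding momentum_squared
    by (intro tendsto_intros isCont_tendsto_compose[OF DERIV_isCont[OF V_deriv] q_lim])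
  from tendsto_real_sqrt[OF this] have "((\<lambda>t. \<bar>p t\<bar>) \<longlongrightarrow> sqrt (2 * (E - V L))) at_top"
    by simp
  moreover have "\<forall>\<^sub>F t in at_top. \<bar>p t\<bar> = p t"
    unfolding eventually_at_top_linorder by (intro exI[of _ t0] allI impI) (simp add: abs_of_pos moving)
  ultimately have p_lim: "(p \<longlongrightarrow> sqrt (2 * (E - V L))) at_top"
    by (rule Lim_transform_eventually)
  show False
  proof (cases "V L = E")
    case True
    have "((\<lambda>t. - V' (q t)) \<longlongrightarrow> - V' L) at_top"
      by (intro tendsto_intros isCont_tendsto_compose[OF DERIV_isCont[OF V'_deriv] q_lim])
    moreover have "- V' L \<noteq> 0" using regular_level[OF True] by simp
    moreover have "(p \<longlongrightarrow> 0) at_top" using p_lim True by simp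
    ultimately show False using DERIV_tendsto_nonzero_imp_not_convergent[OF p_deriv] by blast
  next
    case False
    then have "sqrt (2 * (E - V L)) \<noteq> 0" by simp
    then show False using DERIV_tendsto_nonzero_imp_not_convergent[OF q_deriv p_lim] q_lim by blast
  qed
qed

lemma unbounded_below_if_moving_left:
  assumes "\<And>t. t \<ge> t0 \<Longrightarrow> p t < 0"
  shows "\<exists>t\<ge>t0. q t < B"
proof -
  interpret reflected: regular_motion "\<lambda>x. V (- x)" "\<lambda>x. - V' (- x)" "\<lambda>x. V'' (- x)"
      "\<lambda>t. - q t" "\<lambda>t. - p t" E
    by (rule reflected_regular_motion)
  have "\<exists>t\<ge>t0. - q t > - B"
    by (rule reflected.unbounded_above_if_moving_right) (use assms in auto)
  then show ?thesis by auto
qed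

lemma bounded_imp_periodic:
  assumes bounded: "\<And>t. \<bar>q t\<bar> \<le> R"
  obtains T where "T > 0" "\<And>t. q (t + T) = q t \<and> p (t + T) = p t"
proof (cases rule: continuous_two_zeros_or_sign_after[OF isCont_p])
  case (1 t1 t2)
  then show thesis
    using that[of "2 * (t2 - t1)"] newton_solution_periodic_of_turning_points[OF solution] by auto
next
  case (2 t0)
  then obtain t where "q t > R" using unbounded_above_if_moving_right[of "t0 + 1" R] by auto
  then show thesis using bounded[of t] by simp
next
  case (3 t0)
  then obtain t where "q t < - R" using unbounded_below_if_moving_left[of "t0 + 1" "- R"] by auto
  then show thesis using bounded[of t] by simp
qed

text \<open>On a periodic potential a motion that keeps moving right reaches a translate of its
  starting point with the same momentum, so by uniqueness it is periodic up to that translation.\<close>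

lemma translation_periodic_if_moving_right:
  assumes V_periodic: "\<And>x. V (x + c) = V x" and "c > 0" and "p t0 \<ge> 0"
    and moving: "\<And>t. t > t0 \<Longrightarrow> p t > 0"
  obtains T where "T > 0" "\<And>t. q (t + T) = q t + c \<and> p (t + T) = p t"
proof -
  obtain t where t: "t \<ge> t0 + 1" "q t > q t0 + c"
    using unbounded_above_if_moving_right[of "t0 + 1" "q t0 + c"] moving by auto
  then obtain x where x: "t0 \<le> x" "x \<le> t" "q x = q t0 + c"
    using IVT[of q t0 "q t0 + c" t] isCont_q \<open>c > 0\<close> by auto
  then have "x > t0" using \<open>c > 0\<close> by (cases "x = t0") auto
  have "(p x)\<^sup>2 = (p t0)\<^sup>2"
    using momentum_squared[of x] momentum_squared[of t0] x(3) V_periodic by simp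
  then have "p x = p t0"
    using moving[OF \<open>x > t0\<close>] \<open>p t0 \<ge> 0\<close> by (simp add: power2_eq_iff_nonneg)
  have "V' (y + - c) = V' y" for y
    using V'_periodic[OF V_periodic, of "y + - c"] by simp
  then have "newton_solution V' (\<lambda>s. q (s + (x - t0)) + - c) (\<lambda>s. p (s + (x - t0)))"
    by (rule newton_solution_translate[OF solution])
  then have shifted: "q (s + (x - t0)) - c = q s \<and> p (s + (x - t0)) = p s" for s
    using newton_solution_unique[OF _ solution, of _ _ t0 s] x(3) \<open>p x = p t0\<close> by auto
  have "q (s + (x - t0)) = q s + c \<and> p (s + (x - t0)) = p s" for s
    using shifted[of s] by (intro conjI) linarith+
  with \<open>x > t0\<close> show thesis by (intro that[of "x - t0"]) auto
qed

lemma cylinder_periodic: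
  assumes V_periodic: "\<And>x. V (x + 2 * pi) = V x"
  obtains T where "T > 0" "\<And>t. cyl (q (t + T), p (t + T)) = cyl (q t, p t)"
proof (cases rule: continuous_two_zeros_or_sign_after[OF isCont_p])
  case (1 t1 t2)
  then show thesis
    using that[of "2 * (t2 - t1)"] newton_solution_periodic_of_turning_points[OF solution] by auto
next
  case (2 t0)
  then obtain T where "T > 0" "\<And>t. q (t + T) = q t + 2 * pi \<and> p (t + T) = p t"
    using translation_periodic_if_moving_right[OF V_periodic] by auto
  then show thesis using that[of T] by (auto simp: cyl_def)
next
  case (3 t0)
  interpret reflected: regular_motion "\<lambda>x. V (- x)" "\<lambda>x. - V' (- x)" "\<lambda>x. V'' (- x)"
      "\<lambda>t. - q t" "\<lambda>t. - p t" E
    by (rule reflected_regular_motion)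
  have "V (- (x + 2 * pi)) = V (- x)" for x
    using V_periodic[of "- x - 2 * pi"] by simp
  then obtain T where T: "T > 0" "\<And>t. - q (t + T) = - q t + 2 * pi \<and> - p (t + T) = - p t"
    using reflected.translation_periodic_if_moving_right[of "2 * pi" t0] 3 by auto
  have "cyl (q (t + T), p (t + T)) = cyl (q t, p t)" for t
  proof -
    have "q t = q (t + T) + 2 * pi" "p (t + T) = p t" using T(2)[of t] by auto
    then show ?thesis by (simp add: cyl_def)
  qed
  then show thesis using that T(1) by blast
qed

lemma phase_curve_derivative:
  "((\<lambda>t. (q t, p t)) has_vector_derivative (p t, - V' (q t))) (at t)"
  using q_deriv p_deriv
  by (auto intro!: has_vector_derivative_Pair simp: has_real_derivative_iff_has_vector_derivative[symmetric])

lemma phase_velocity_nonzero: "(p t, - V' (q t)) \<noteq> 0"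
  using regular_level momentum_squared[of t] by (auto simp: zero_prod_def)

lemma cylinder_curve_derivative:
  "((\<lambda>t. cyl (q t, p t)) has_vector_derivative (- sin (q t) * p t, cos (q t) * p t, - V' (q t))) (at t)"
  using q_deriv[of t] p_deriv[of t] unfolding cyl_def
  by (auto intro!: derivative_eq_intros has_vector_derivative_Pair
      simp: has_real_derivative_iff_has_vector_derivative[symmetric])

lemma cylinder_velocity_nonzero: "(- sin (q t) * p t, cos (q t) * p t, - V' (q t)) \<noteq> 0"
proof (cases "p t = 0")
  case True
  then show ?thesis using regular_level momentum_squared[of t] by (auto simp: zero_prod_def)
next
  case False
  moreover have "sin (q t) \<noteq> 0 \<or> cos (q t) \<noteq> 0"
    using sin_zero_norm_cos_one[of "q t"] by auto
  ultimately show ?thesis by (auto simp: zero_prod_def)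
qed

lemma period_of_bounded_motion:
  assumes "\<And>t. \<bar>q t\<bar> \<le> R"
  shows "has_minimal_period (\<lambda>t. (q t, p t))"
proof -
  obtain T where "T > 0" "\<And>t. q (t + T) = q t \<and> p (t + T) = p t"
    using bounded_imp_periodic[OF assms] by blast
  then show ?thesis
    by (intro period_of_regular_curve[OF phase_curve_derivative phase_velocity_nonzero]) auto
qed

lemma period_on_cylinder:
  assumes "\<And>x. V (x + 2 * pi) = V x"
  shows "has_minimal_period (\<lambda>t. cyl (q t, p t))"
proof -
  obtain T where "T > 0" "\<And>t. cyl (q (t + T), p (t + T)) = cyl (q t, p t)"
    using cylinder_periodic[OF assms] by blast
  then show ?thesis
    by (intro period_of_regular_curve[OF cylinder_curve_derivative cylinder_velocity_nonzero]) auto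
qed

end

definition lambda_potential :: "real \<Rightarrow> real \<Rightarrow> real \<Rightarrow> real \<Rightarrow> real \<Rightarrow> real" where
  "lambda_potential d m1 m2 h x = - d * (m1 + m2) * cosh x - h * d\<^sup>2 * (cosh x)\<^sup>2"

definition nu_potential :: "real \<Rightarrow> real \<Rightarrow> real \<Rightarrow> real \<Rightarrow> real \<Rightarrow> real" where
  "nu_potential d m1 m2 h x = d * (m1 - m2) * sin x + h * d\<^sup>2 * (sin x)\<^sup>2"

lemma Hlam_newton_form: "Hlam d m1 m2 h = (\<lambda>z. (snd z)\<^sup>2 / 2 + lambda_potential d m1 m2 h (fst z))"
  unfolding Hlam_def[abs_def] lambda_potential_def by (simp add: fun_eq_iff)

lemma Hnu_newton_form: "Hnu d m1 m2 h = (\<lambda>z. (snd z)\<^sup>2 / 2 + nu_potential d m1 m2 h (fst z))"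
  unfolding Hnu_def[abs_def] nu_potential_def by (simp add: fun_eq_iff)

lemma potential_lambda_potential:
  "potential (lambda_potential d m1 m2 h)
     (\<lambda>x. - d * (m1 + m2) * sinh x - 2 * h * d\<^sup>2 * cosh x * sinh x)
     (\<lambda>x. - d * (m1 + m2) * cosh x - 2 * h * d\<^sup>2 * ((sinh x)\<^sup>2 + (cosh x)\<^sup>2))"
  unfolding lambda_potential_def[abs_def]
  by unfold_locales
    (auto intro!: derivative_eq_intros continuous_intros isCont_cosh isCont_sinh
      simp: algebra_simps power2_eq_square)

lemma potential_nu_potential:
  "potential (nu_potential d m1 m2 h)
     (\<lambda>x. d * (m1 - m2) * cos x + 2 * h * d\<^sup>2 * sin x * cos x)
     (\<lambda>x. - d * (m1 - m2) * sin x + 2 * h * d\<^sup>2 * ((cos x)\<^sup>2 - (sin x)\<^sup>2))"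
  unfolding nu_potential_def[abs_def]
  by unfold_locales
    (auto intro!: derivative_eq_intros continuous_intros simp: algebra_simps power2_eq_square)

lemma regular_torus_energies:
  assumes "regular_torus d m1 m2 h g TT" and "(zl, cyl zn) \<in> TT"
  shows "Hlam d m1 m2 h zl = - g" and "Hnu d m1 m2 h zn = g"
proof -
  have "(zl, cyl zn) \<in> level_set d m1 m2 h g"
    using assms connected_component_subset unfolding regular_torus_def by blast
  then obtain w where "Hlam d m1 m2 h zl = - g" "Hnu d m1 m2 h w = g" "cyl zn = cyl w"
    unfolding level_set_def by auto
  moreover from \<open>cyl zn = cyl w\<close> have "sin (fst zn) = sin (fst w)" "snd zn = snd w"
    by (auto simp: cyl_def)
  ultimately show "Hlam d m1 m2 h zl = - g" "Hnu d m1 m2 h zn = g"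
    by (auto simp: Hnu_def)
qed

lemma torus_lambda_motion_period:
  assumes torus: "regular_torus d m1 m2 h g TT" and sol: "ham_solution (Hlam d m1 m2 h) zl"
    and orbit: "\<And>\<tau>. (zl \<tau>, cyl (zn \<tau>)) \<in> TT"
  shows "has_minimal_period zl"
proof -
  obtain V' V'' where "potential (lambda_potential d m1 m2 h) V' V''"
    using potential_lambda_potential by blast
  then interpret potential "lambda_potential d m1 m2 h" V' V'' .
  interpret regular_motion "lambda_potential d m1 m2 h" V' V'' "\<lambda>t. fst (zl t)" "\<lambda>t. snd (zl t)" "- g"
  proof unfold_locales
    show "newton_solution V' (\<lambda>t. fst (zl t)) (\<lambda>t. snd (zl t))"
      using ham_solution_imp_newton_solution sol by (simp add: Hlam_newton_form)
    show "(snd (zl t))\<^sup>2 / 2 + lambda_potential d m1 m2 h (fst (zl t)) = - g" for t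
      using regular_torus_energies(1)[OF torus orbit] by (simp add: Hlam_newton_form)
    show "lambda_potential d m1 m2 h x = - g \<Longrightarrow> V' x \<noteq> 0" for x
      using torus regular_value_imp_V'_nonzero unfolding regular_torus_def Hlam_newton_form by blast
  qed
  have "bounded TT" using torus compact_imp_bounded unfolding regular_torus_def by blast
  then obtain R where R: "\<And>x. x \<in> TT \<Longrightarrow> norm x \<le> R" unfolding bounded_iff by blast
  have "\<bar>fst (zl t)\<bar> \<le> R" for t
  proof -
    have "\<bar>fst (zl t)\<bar> \<le> norm (zl t)" using norm_fst_le[of "fst (zl t)" "snd (zl t)"] by simp
    also have "\<dots> \<le> norm (zl t, cyl (zn t))" by (rule norm_fst_le)
    also have "\<dots> \<le> R" using R orbit by blast
    finally show ?thesis .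
  qed
  from period_of_bounded_motion[OF this] show ?thesis by simp
qed

lemma torus_nu_motion_period:
  assumes torus: "regular_torus d m1 m2 h g TT" and sol: "ham_solution (Hnu d m1 m2 h) zn"
    and orbit: "\<And>\<tau>. (zl \<tau>, cyl (zn \<tau>)) \<in> TT"
  shows "has_minimal_period (cyl \<circ> zn)"
proof -
  obtain V' V'' where "potential (nu_potential d m1 m2 h) V' V''"
    using potential_nu_potential by blast
  then interpret potential "nu_potential d m1 m2 h" V' V'' .
  interpret regular_motion "nu_potential d m1 m2 h" V' V'' "\<lambda>t. fst (zn t)" "\<lambda>t. snd (zn t)" g
  proof unfold_locales
    show "newton_solution V' (\<lambda>t. fst (zn t)) (\<lambda>t. snd (zn t))"
      using ham_solution_imp_newton_solution sol by (simp add: Hnu_newton_form)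
    show "(snd (zn t))\<^sup>2 / 2 + nu_potential d m1 m2 h (fst (zn t)) = g" for t
      using regular_torus_energies(2)[OF torus orbit] by (simp add: Hnu_newton_form)
    show "nu_potential d m1 m2 h x = g \<Longrightarrow> V' x \<noteq> 0" for x
      using torus regular_value_imp_V'_nonzero unfolding regular_torus_def Hnu_newton_form by blast
  qed
  have "nu_potential d m1 m2 h (x + 2 * pi) = nu_potential d m1 m2 h x" for x
    by (simp add: nu_potential_def)
  from period_on_cylinder[OF this] show ?thesis by (simp add: comp_def)
qed

lemma collision_iff_cylinder: "collision zl zn \<longleftrightarrow> fst zl = 0 \<and> fst (cyl zn) = 0"
  unfolding collision_def cyl_def by (simp add: cos_zero_iff_int2 add.commute)

theorem corollary4:
  fixes d m1 m2 h g :: real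
    and TT :: "((real \<times> real) \<times> (real \<times> real \<times> real)) set"
    and zl zn :: "real \<Rightarrow> real \<times> real"
  assumes "d > 0" and "m1 > 0" and "m2 > 0" and "h < 0"
    and "regular_torus d m1 m2 h g TT"
    and "ham_solution (Hlam d m1 m2 h) zl"
    and "ham_solution (Hnu d m1 m2 h) zn"
    and "\<forall>\<tau>. (zl \<tau>, cyl (zn \<tau>)) \<in> TT"
    and "\<exists>!\<tau>. collision (zl \<tau>) (zn \<tau>)"
  shows "period (cyl \<circ> zn) / period zl \<notin> \<rat>"
proof
  assume ratio: "period (cyl \<circ> zn) / period zl \<in> \<rat>"
  have lam: "period zl > 0" "\<And>t. zl (t + period zl) = zl t"
    using torus_lambda_motion_period[OF assms(5,6)] assms(8) unfolding has_minimal_period_def by auto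
  have nu: "period (cyl \<circ> zn) > 0" "\<And>t. (cyl \<circ> zn) (t + period (cyl \<circ> zn)) = (cyl \<circ> zn) t"
    using torus_nu_motion_period[OF assms(5,7)] assms(8) unfolding has_minimal_period_def by auto
  obtain P where "P > 0" and zl_P: "\<And>t. zl (t + P) = zl t" and zn_P: "\<And>t. cyl (zn (t + P)) = cyl (zn t)"
    using common_period_of_rational_ratio[where f = zl and g = "cyl \<circ> zn", OF lam(1) nu(1) ratio lam(2) nu(2)]
    by auto
  obtain \<tau> where "collision (zl \<tau>) (zn \<tau>)" using assms(9) by blast
  then have "collision (zl (\<tau> + P)) (zn (\<tau> + P))"
    unfolding collision_iff_cylinder zl_P zn_P .
  with \<open>collision (zl \<tau>) (zn \<tau>)\<close> assms(9) have "\<tau> + P = \<tau>" by blast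
  with \<open>P > 0\<close> show False by simp
qed

end
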